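(* Let $\Sigma=\bigcup_{j=1}^{g+1}[a_j,b_j]\subset\mathbb{R}$ be a union of pairwise disjoint compact intervals and $w$ a weight on $\Sigma$ of the form \[ w(x)=\sum_{j=1}^{g+1}\mathbb{1}_{[a_j,b_j]}(x)\,h_j(x)\left(\sqrt{x-a_j}\right)^{\alpha_j}\left(\sqrt{b_j-x}\right)^{\beta_j},\qquad \alpha_j,\beta_j\in\{-1,1\}, \] with $h_j$ positive on $[a_j,b_j]$ and analytic in a neighborhood of it, $\int_\Sigma w=1$; let $p_0,p_1,\dots$ be its orthonormal polynomials. Let $\mathbf{A}\in\mathbb{C}^{n\times n}$ be generic, $\mathbf{A}=\mathbf{V}\boldsymbol{\Lambda}\mathbf{V}^{-1}$ with $\boldsymbol{\Lambda}=\operatorname{diag}(\lambda_1,\ldots,\lambda_n)$, and $\mathbf{b}\in\mathbb{C}^n$. Let $\Gamma$ be a counterclockwise contour enclosing the spectrum of $\mathbf{A}$, $f$ analytic in a region containing $\Gamma$ and its interior, so that $f(\mathbf{A})\mathbf{b}=\frac{1}{2\pi i}\int_\Gamma f(z)(z\mathbf{I}-\mathbf{A})^{-1}\mathbf{b}\,dz$. Let $z_1,\ldots,z_m\in\Gamma\setminus\Sigma$ be quadrature nodes with weights $\omega_1,\ldots,\omega_m$, and define \[ f_{k,m}(\mathbf{A})\mathbf{b}=-\sum_{\ell=0}^{k-1}\left(\sum_{j=1}^m f(z_j)\,\omega_j\,\mathcal{C}_\Sigma[p_\ell w](z_j)\right)p_\ell(\mathbf{A})\mathbf{b},\qquad \rho_m(x)=\int_\Gamma\frac{f(z)}{z-x}\,dz-\sum_{j=1}^m\frac{f(z_j)}{z_j-x}\,\omega_j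 . \] Assume the eigenvalues satisfy $\operatorname{Re}\mathfrak{g}(\lambda_\ell)<\min_{1\le j\le m}\operatorname{Re}\mathfrak{g}(z_j)$ for all $\ell$, that $|f(z)|\le M$ for $z\in\Gamma$, and that $\sum_{j=1}^m|\omega_j|\le 2\pi L$. Then \[ \|f(\mathbf{A})\mathbf{b}-f_{k,m}(\mathbf{A})\mathbf{b}\|_2\le\frac{1}{2\pi}\|\mathbf{V}\|_2\|\mathbf{V}^{-1}\|_2\|\mathbf{b}\|_2\max_{1\le\ell\le n}|\rho_m(\lambda_\ell)|+LM\max_{1\le j\le m}E_k(z_j), \] where $E_k(z)=\left\|\sum_{j=0}^{k-1}\mathcal{S}_\Sigma[p_jw](z)\,p_j(\mathbf{A})\mathbf{b}-(\mathbf{A}-z\mathbf{I})^{-1}\mathbf{b}\right\|_2$.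
   Context: For $z\notin\Sigma$: $\mathcal{C}_\Sigma[p_\ell w](z)=\frac{1}{2\pi i}\int_\Sigma\frac{p_\ell(s)w(s)}{s-z}ds$ and $\mathcal{S}_\Sigma[p_\ell w](z)=2\pi i\,\mathcal{C}_\Sigma[p_\ell w](z)$. $\|\cdot\|_2$ is the Euclidean norm and induced matrix norm. A matrix is generic if it is diagonalizable and has no eigenvalue at an endpoint $a_j,b_j$. $\mathfrak{g}$ is the exterior Green's function of $\Sigma$ with pole at infinity: $\operatorname{Re}\mathfrak{g}$ is harmonic on $\mathbb{C}\setminus\Sigma$, continuous, zero on $\Sigma$, and $\operatorname{Re}\mathfrak{g}(z)=\log|z|+O(1)$ as $z\to\infty$. *)

theory Defs
  imports "HOL-Complex_Analysis.Complex_Analysis" "HOL-Computational_Algebra.Polynomial"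
begin

fun mpow :: "complex^'n^'n \<Rightarrow> nat \<Rightarrow> complex^'n^'n" where
  "mpow A 0 = mat 1"
| "mpow A (Suc k) = A ** mpow A k"

definition poly_mat :: "real poly \<Rightarrow> complex^'n^'n \<Rightarrow> complex^'n^'n" where
  "poly_mat p A = (\<Sum>i\<le>degree p. coeff p i *\<^sub>R mpow A i)"

definition diag_mat :: "('n \<Rightarrow> complex) \<Rightarrow> complex^'n^'n" where
  "diag_mat d = (\<chi> i j. if i = j then d i else 0)"

text \<open>The set Sigma as union of the intervals [a_j,b_j], j < N (N = g+1).\<close>
definition Sigma_set :: "nat \<Rightarrow> (nat \<Rightarrow> real) \<Rightarrow> (nat \<Rightarrow> real) \<Rightarrow> real set" where
  "Sigma_set N a b = (\<Union>j<N. {a j..b j})"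

definition weight_fun :: "nat \<Rightarrow> (nat \<Rightarrow> real) \<Rightarrow> (nat \<Rightarrow> real) \<Rightarrow> (nat \<Rightarrow> real \<Rightarrow> real)
    \<Rightarrow> (nat \<Rightarrow> int) \<Rightarrow> (nat \<Rightarrow> int) \<Rightarrow> real \<Rightarrow> real" where
  "weight_fun N a b h \<alpha> \<beta> x =
     (\<Sum>j<N. indicator {a j..b j} x * h j x * (sqrt (x - a j) powi \<alpha> j) * (sqrt (b j - x) powi \<beta> j))"

definition cauchy_transform :: "real set \<Rightarrow> (real \<Rightarrow> complex) \<Rightarrow> complex \<Rightarrow> complex" where
  "cauchy_transform S F z = (1 / (2 * pi * \<i>)) * integral S (\<lambda>s. F s / (complex_of_real s - z))"

definition S_transform :: "real set \<Rightarrow> (real \<Rightarrow> complex) \<Rightarrow> complex \<Rightarrow> complex" where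
  "S_transform S F z = 2 * pi * \<i> * cauchy_transform S F z"

definition harmonic_on :: "(complex \<Rightarrow> real) \<Rightarrow> complex set \<Rightarrow> bool" where
  "harmonic_on u U \<longleftrightarrow> open U \<and>
     (\<forall>z\<in>U. \<exists>r>0. \<exists>F. F holomorphic_on ball z r \<and> ball z r \<subseteq> U \<and> (\<forall>w\<in>ball z r. u w = Re (F w)))"

text \<open>G is (the real part of) the exterior Green's function of S with pole at infinity.\<close>
definition exterior_green :: "real set \<Rightarrow> (complex \<Rightarrow> real) \<Rightarrow> bool" where
  "exterior_green S G \<longleftrightarrow>
     harmonic_on G (- (complex_of_real ` S)) \<and> continuous_on UNIV G \<and>
     (\<forall>x\<in>S. G (complex_of_real x) = 0) \<and>
     (\<exists>C R. \<forall>z. norm z \<ge> R \<longrightarrow> \<bar>G z - ln (norm z)\<bar> \<le> C)"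

definition orthonormal_polys :: "real set \<Rightarrow> (real \<Rightarrow> real) \<Rightarrow> (nat \<Rightarrow> real poly) \<Rightarrow> bool" where
  "orthonormal_polys S w p \<longleftrightarrow>
     (\<forall>l. degree (p l) = l \<and> lead_coeff (p l) > 0) \<and>
     (\<forall>i j. ((\<lambda>x. poly (p i) x * poly (p j) x * w x) has_integral (if i = j then 1 else 0)) S)"

definition fun_mat_vec :: "(real \<Rightarrow> complex) \<Rightarrow> (complex \<Rightarrow> complex) \<Rightarrow> complex^'n^'n \<Rightarrow> complex^'n \<Rightarrow> complex^'n" where
  "fun_mat_vec \<gamma> f A b =
     (\<chi> i. (1 / (2 * pi * \<i>)) * contour_integral \<gamma> (\<lambda>z. f z * ((matrix_inv (mat z - A) *v b) $ i)))"

end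

theory Submission
  imports Defs
begin

(* Write c = V^-1 b.  The resolvent is (zI - A)^-1 b = V (c_k / (z - lambda_k))_k, so the contour
   integral defining f(A)b and the quadrature rule applied to the resolvent both act diagonally, and
   their difference is V (rho_m(lambda_k) c_k)_k / (2 pi i).  As C_Sigma = S_Sigma / (2 pi i), adding
   and subtracting sum_j f(z_j) omega_j (z_j I - A)^-1 b splits f(A)b - f_km(A)b into that term plus
   1/(2 pi i) sum_j f(z_j) omega_j e_j with norm e_j = E_k(z_j); the triangle inequality concludes. *)

lemma
  fixes V :: "'a::semiring_1^'n^'m"
  assumes "invertible V"
  shows matrix_inv_right: "V ** matrix_inv V = mat 1"
    and matrix_inv_left: "matrix_inv V ** V = mat 1"
proof -
  have "V ** matrix_inv V = mat 1 \<and> matrix_inv V ** V = mat 1"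
    using assms unfolding invertible_def matrix_inv_def by (rule someI_ex)
  then show "V ** matrix_inv V = mat 1" "matrix_inv V ** V = mat 1" by auto
qed

lemma matrix_inv_unique:
  fixes X Y :: "'a::field^'n^'n"
  assumes "X ** Y = mat 1"
  shows "matrix_inv X = Y"
proof -
  have "invertible X"
    using assms matrix_left_right_inverse unfolding invertible_def by blast
  have "matrix_inv X = matrix_inv X ** (X ** Y)"
    using assms by simp
  also have "\<dots> = (matrix_inv X ** X) ** Y"
    by (simp add: matrix_mul_assoc)
  also have "\<dots> = Y"
    using \<open>invertible X\<close> by (simp add: matrix_inv_left)
  finally show ?thesis .
qed

lemma matrix_inv_similar:
  fixes V D :: "'a::field^'n^'n"
  assumes "invertible V" "invertible D"
  shows "matrix_inv (V ** D ** matrix_inv V) = V ** matrix_inv D ** matrix_inv V"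
proof (rule matrix_inv_unique)
  have "V ** D ** matrix_inv V ** (V ** matrix_inv D ** matrix_inv V)
      = V ** (D ** (matrix_inv V ** V) ** matrix_inv D) ** matrix_inv V"
    by (simp add: matrix_mul_assoc)
  also have "\<dots> = mat 1"
    using assms by (simp add: matrix_inv_left matrix_inv_right)
  finally show "V ** D ** matrix_inv V ** (V ** matrix_inv D ** matrix_inv V) = mat 1" .
qed

lemma matrix_mul_mat_commute:
  fixes A :: "'a::comm_semiring_1^'n^'m"
  shows "A ** mat c = mat c ** A"
  by (simp add: vec_eq_iff matrix_matrix_mult_def mat_def if_distrib if_distribR mult.commute
      cong: if_cong)

lemma matrix_diff_ldistrib:
  fixes A :: "'a::ring_1^'n^'m"
  shows "A ** (B - C) = A ** B - A ** C"
  by (simp add: vec_eq_iff matrix_matrix_mult_def right_diff_distrib sum_subtractf)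

lemma matrix_diff_rdistrib:
  fixes A :: "'a::ring_1^'n^'m"
  shows "(A - B) ** C = A ** C - B ** C"
  by (simp add: vec_eq_iff matrix_matrix_mult_def left_diff_distrib sum_subtractf)

lemma matrix_vector_mult_uminus_right:
  fixes A :: "'a::ring_1^'n^'m"
  shows "A *v (- x) = - (A *v x)"
  by (simp add: vec_eq_iff matrix_vector_mult_def sum_negf)

lemma diag_mat_mult_vec: "diag_mat d *v x = (\<chi> k. d k * (x $ k))"
  by (simp add: vec_eq_iff diag_mat_def matrix_vector_mult_def if_distrib[where f = "\<lambda>u. u * _"]
      cong: if_cong)

lemma diag_mat_mult: "diag_mat d ** diag_mat e = diag_mat (\<lambda>k. d k * e k)"
  by (auto simp add: vec_eq_iff matrix_matrix_mult_def diag_mat_def if_distrib[where f = "\<lambda>u. u * _"]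
      cong: if_cong)

lemma diag_mat_const: "diag_mat (\<lambda>k. c) = mat c"
  by (simp add: diag_mat_def mat_def)

lemma mat_minus_diag_mat: "mat z - diag_mat d = diag_mat (\<lambda>k. z - d k)"
  by (simp add: vec_eq_iff diag_mat_def mat_def)

lemma diag_mat_minus_mat: "diag_mat d - mat z = diag_mat (\<lambda>k. d k - z)"
  by (simp add: vec_eq_iff diag_mat_def mat_def)

lemma matrix_inv_diag_mat:
  fixes d :: "'n::finite \<Rightarrow> complex"
  assumes "\<And>k. d k \<noteq> 0"
  shows "matrix_inv (diag_mat d) = diag_mat (\<lambda>k. inverse (d k))"
  using assms by (intro matrix_inv_unique) (simp add: diag_mat_mult diag_mat_const)

lemma invertible_diag_mat:
  fixes d :: "'n::finite \<Rightarrow> complex"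
  assumes "\<And>k. d k \<noteq> 0"
  shows "invertible (diag_mat d)"
  unfolding invertible_def
  using assms
  by (intro exI[of _ "diag_mat (\<lambda>k. inverse (d k))"]) (simp add: diag_mat_mult diag_mat_const)

lemma matrix_conj_mat:
  fixes V :: "'a::field^'n^'n"
  assumes "invertible V"
  shows "V ** mat c ** matrix_inv V = mat c"
proof -
  have "V ** mat c ** matrix_inv V = mat c ** (V ** matrix_inv V)"
    by (simp only: matrix_mul_mat_commute matrix_mul_assoc)
  then show ?thesis
    using assms by (simp add: matrix_inv_right)
qed

lemma
  fixes V :: "complex^'n^'n"
  assumes "invertible V"
  shows mat_minus_diagonalizable:
      "mat z - V ** diag_mat d ** matrix_inv V = V ** diag_mat (\<lambda>k. z - d k) ** matrix_inv V"
    and diagonalizable_minus_mat: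
      "V ** diag_mat d ** matrix_inv V - mat z = V ** diag_mat (\<lambda>k. d k - z) ** matrix_inv V"
proof -
  have "mat z - V ** diag_mat d ** matrix_inv V = V ** (mat z - diag_mat d) ** matrix_inv V"
    by (subst (1) matrix_conj_mat[OF assms, of z, symmetric])
      (simp only: matrix_diff_ldistrib matrix_diff_rdistrib)
  then show "mat z - V ** diag_mat d ** matrix_inv V = V ** diag_mat (\<lambda>k. z - d k) ** matrix_inv V"
    by (simp only: mat_minus_diag_mat)
  have "V ** diag_mat d ** matrix_inv V - mat z = V ** (diag_mat d - mat z) ** matrix_inv V"
    by (subst (1) matrix_conj_mat[OF assms, of z, symmetric])
      (simp only: matrix_diff_ldistrib matrix_diff_rdistrib)
  then show "V ** diag_mat d ** matrix_inv V - mat z = V ** diag_mat (\<lambda>k. d k - z) ** matrix_inv V"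
    by (simp only: diag_mat_minus_mat)
qed

lemma matrix_inv_diagonalizable_mult_vec:
  fixes V :: "complex^'n^'n"
  assumes "invertible V" "\<And>k. d k \<noteq> 0"
  shows "matrix_inv (V ** diag_mat d ** matrix_inv V) *v b
    = V *v (\<chi> k. (matrix_inv V *v b) $ k / d k)"
  using assms
  by (simp add: matrix_inv_similar invertible_diag_mat matrix_inv_diag_mat diag_mat_mult_vec
      divide_inverse mult.commute flip: matrix_vector_mul_assoc)

lemma
  fixes V :: "complex^'n^'n"
  assumes "invertible V" "\<And>k. z \<noteq> lam k"
  shows resolvent_diagonalizable:
      "matrix_inv (mat z - V ** diag_mat lam ** matrix_inv V) *v b
         = V *v (\<chi> k. (matrix_inv V *v b) $ k / (z - lam k))"
    and resolvent_diagonalizable_neg: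
      "matrix_inv (V ** diag_mat lam ** matrix_inv V - mat z) *v b
         = - (matrix_inv (mat z - V ** diag_mat lam ** matrix_inv V) *v b)"
proof -
  have nonzero: "z - lam k \<noteq> 0" "lam k - z \<noteq> 0" for k
    using assms(2)[of k] by auto
  show resolvent: "matrix_inv (mat z - V ** diag_mat lam ** matrix_inv V) *v b
      = V *v (\<chi> k. (matrix_inv V *v b) $ k / (z - lam k))"
    unfolding mat_minus_diagonalizable[OF assms(1)]
    by (rule matrix_inv_diagonalizable_mult_vec[OF assms(1) nonzero(1)])
  have "matrix_inv (V ** diag_mat lam ** matrix_inv V - mat z) *v b
      = V *v (\<chi> k. (matrix_inv V *v b) $ k / (lam k - z))"
    unfolding diagonalizable_minus_mat[OF assms(1)]
    by (rule matrix_inv_diagonalizable_mult_vec[OF assms(1) nonzero(2)])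
  also have "\<dots> = V *v (- (\<chi> k. (matrix_inv V *v b) $ k / (z - lam k)))"
    by (rule arg_cong[where f = "(*v) V"]) (simp add: vec_eq_iff minus_divide_right)
  finally show "matrix_inv (V ** diag_mat lam ** matrix_inv V - mat z) *v b
      = - (matrix_inv (mat z - V ** diag_mat lam ** matrix_inv V) *v b)"
    by (simp only: resolvent matrix_vector_mult_uminus_right)
qed

lemma contour_integral_matrix_vector_mult:
  fixes V :: "complex^'n^'m" and g :: "complex \<Rightarrow> complex^'n"
  assumes "\<And>k. (\<lambda>\<zeta>. g \<zeta> $ k) contour_integrable_on \<gamma>"
  shows "contour_integral \<gamma> (\<lambda>\<zeta>. (V *v g \<zeta>) $ i)
    = (V *v (\<chi> k. contour_integral \<gamma> (\<lambda>\<zeta>. g \<zeta> $ k))) $ i"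
  using assms
  by (simp add: matrix_vector_mult_def contour_integral_sum contour_integrable_lmul
      contour_integral_lmul)

lemma fun_mat_vec_diagonalizable:
  fixes V :: "complex^'n^'n"
  assumes "invertible V" "valid_path \<gamma>" "open U" "f holomorphic_on U" "path_image \<gamma> \<subseteq> U"
    and "\<And>k. lam k \<notin> path_image \<gamma>"
  shows "fun_mat_vec \<gamma> f (V ** diag_mat lam ** matrix_inv V) b
    = (1 / (2 * pi * \<i>)) *s
        (V *v (\<chi> k. contour_integral \<gamma> (\<lambda>\<zeta>. f \<zeta> / (\<zeta> - lam k)) * (matrix_inv V *v b) $ k))"
proof -
  define c where "c = matrix_inv V *v b"
  define R where "R \<zeta> = matrix_inv (mat \<zeta> - V ** diag_mat lam ** matrix_inv V) *v b" for \<zeta>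
  define g where "g \<zeta> = (\<chi> k. f \<zeta> / (\<zeta> - lam k) * c $ k)" for \<zeta>
  have integrable: "(\<lambda>\<zeta>. f \<zeta> / (\<zeta> - lam k)) contour_integrable_on \<gamma>" for k
  proof (rule contour_integrable_holomorphic_simple)
    show "(\<lambda>\<zeta>. f \<zeta> / (\<zeta> - lam k)) holomorphic_on U - {lam k}"
      by (intro holomorphic_intros holomorphic_on_subset[OF assms(4)]) auto
  qed (use assms in auto)
  have integrand: "f \<zeta> *s R \<zeta> = V *v g \<zeta>" if "\<zeta> \<in> path_image \<gamma>" for \<zeta>
  proof -
    have "\<zeta> \<noteq> lam k" for k
      using assms(6) that by blast
    then have "f \<zeta> *s R \<zeta> = V *v (f \<zeta> *s (\<chi> k. c $ k / (\<zeta> - lam k)))"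
      using assms(1) by (simp add: R_def resolvent_diagonalizable vector_scalar_commute c_def)
    also have "f \<zeta> *s (\<chi> k. c $ k / (\<zeta> - lam k)) = g \<zeta>"
      by (simp add: g_def vec_eq_iff)
    finally show ?thesis .
  qed
  have "contour_integral \<gamma> (\<lambda>\<zeta>. f \<zeta> * R \<zeta> $ i)
      = (V *v (\<chi> k. contour_integral \<gamma> (\<lambda>\<zeta>. f \<zeta> / (\<zeta> - lam k)) * c $ k)) $ i" for i
  proof -
    have "contour_integral \<gamma> (\<lambda>\<zeta>. f \<zeta> * R \<zeta> $ i) = contour_integral \<gamma> (\<lambda>\<zeta>. (V *v g \<zeta>) $ i)"
      by (rule contour_integral_eq) (metis integrand vector_smult_component)
    also have "\<dots> = (V *v (\<chi> k. contour_integral \<gamma> (\<lambda>\<zeta>. g \<zeta> $ k))) $ i"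
      by (rule contour_integral_matrix_vector_mult)
        (unfold g_def vec_lambda_beta, rule contour_integrable_rmul[OF integrable])
    also have "(\<chi> k. contour_integral \<gamma> (\<lambda>\<zeta>. g \<zeta> $ k))
        = (\<chi> k. contour_integral \<gamma> (\<lambda>\<zeta>. f \<zeta> / (\<zeta> - lam k)) * c $ k)"
      by (simp only: g_def vec_lambda_beta contour_integral_rmul[OF integrable])
    finally show ?thesis .
  qed
  then show ?thesis
    by (simp add: fun_mat_vec_def vec_eq_iff R_def c_def)
qed

lemma sum_resolvent_diagonalizable:
  fixes V :: "complex^'n^'n"
  assumes "invertible V" "\<And>j k. j \<in> S \<Longrightarrow> z j \<noteq> lam k"
  shows "(\<Sum>j\<in>S. c j *s (matrix_inv (mat (z j) - V ** diag_mat lam ** matrix_inv V) *v b))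
    = V *v (\<chi> k. (\<Sum>j\<in>S. c j / (z j - lam k)) * (matrix_inv V *v b) $ k)"
proof -
  define y where "y = matrix_inv V *v b"
  have "(\<Sum>j\<in>S. c j *s (matrix_inv (mat (z j) - V ** diag_mat lam ** matrix_inv V) *v b))
      = (\<Sum>j\<in>S. c j *s (V *v (\<chi> k. y $ k / (z j - lam k))))"
    using assms by (intro sum.cong refl) (simp add: resolvent_diagonalizable y_def)
  also have "\<dots> = V *v (\<chi> k. (\<Sum>j\<in>S. c j / (z j - lam k)) * y $ k)"
    by (simp add: vec_eq_iff matrix_vector_mult_def sum_component sum_distrib_left sum_distrib_right
        mult_ac sum.swap[of _ S])
  finally show ?thesis
    by (simp only: y_def)
qed

lemma fun_mat_vec_quadrature_error:
  fixes V :: "complex^'n^'n"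
  assumes "invertible V" "valid_path \<gamma>" "open U" "f holomorphic_on U" "path_image \<gamma> \<subseteq> U"
    and "\<And>k. lam k \<notin> path_image \<gamma>" "\<And>j. j \<in> J \<Longrightarrow> z j \<in> path_image \<gamma>"
  defines "A \<equiv> V ** diag_mat lam ** matrix_inv V"
  shows "fun_mat_vec \<gamma> f A b + (1 / (2 * pi * \<i>)) *s (\<Sum>j\<in>J. (f (z j) * \<omega> j) *s Y j)
    = (1 / (2 * pi * \<i>)) *s (V *v (\<chi> k. (contour_integral \<gamma> (\<lambda>\<zeta>. f \<zeta> / (\<zeta> - lam k))
          - (\<Sum>j\<in>J. f (z j) / (z j - lam k) * \<omega> j)) * (matrix_inv V *v b) $ k))
      + (1 / (2 * pi * \<i>)) *s
          (\<Sum>j\<in>J. (f (z j) * \<omega> j) *s (Y j + matrix_inv (mat (z j) - A) *v b))"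
proof -
  define c where "c = matrix_inv V *v b"
  define CI where "CI k = contour_integral \<gamma> (\<lambda>\<zeta>. f \<zeta> / (\<zeta> - lam k))" for k
  define Q where "Q k = (\<Sum>j\<in>J. f (z j) / (z j - lam k) * \<omega> j)" for k
  define R where "R j = matrix_inv (mat (z j) - A) *v b" for j
  have "z j \<noteq> lam k" if "j \<in> J" for j k
    using assms(6,7) that by metis
  then have quadrature: "(\<Sum>j\<in>J. (f (z j) * \<omega> j) *s R j) = V *v (\<chi> k. Q k * c $ k)"
    unfolding R_def A_def c_def Q_def
    using sum_resolvent_diagonalizable[OF assms(1), of J z lam "\<lambda>j. f (z j) * \<omega> j" b]
    by (simp add: mult_ac)
  have "(\<chi> k. CI k * c $ k) = (\<chi> k. (CI k - Q k) * c $ k) + (\<chi> k. Q k * c $ k)"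
    by (simp add: vec_eq_iff algebra_simps)
  then have "V *v (\<chi> k. CI k * c $ k) = V *v (\<chi> k. (CI k - Q k) * c $ k) + (\<Sum>j\<in>J. (f (z j) * \<omega> j) *s R j)"
    by (simp only: quadrature matrix_vector_right_distrib)
  moreover have "fun_mat_vec \<gamma> f A b = (1 / (2 * pi * \<i>)) *s (V *v (\<chi> k. CI k * c $ k))"
    unfolding A_def CI_def c_def by (rule fun_mat_vec_diagonalizable[OF assms(1-6)])
  ultimately show ?thesis
    unfolding c_def [symmetric] CI_def [symmetric] Q_def [symmetric] R_def [symmetric]
    by (simp add: vector_add_ldistrib sum.distrib add_ac)
qed

lemma cauchy_transform_quadrature_swap:
  "(\<Sum>l<n. (\<Sum>j\<in>J. c j * cauchy_transform S (F l) (z j)) *s v l)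
     = (1 / (2 * pi * \<i>)) *s (\<Sum>j\<in>J. c j *s (\<Sum>l<n. S_transform S (F l) (z j) *s v l))"
proof -
  have "cauchy_transform S F \<zeta> = 1 / (2 * pi * \<i>) * S_transform S F \<zeta>" for F \<zeta>
    by (simp add: S_transform_def)
  then show ?thesis
    by (simp add: vec_eq_iff sum_component sum_distrib_left sum_distrib_right mult_ac
        sum.swap[of _ "{..<n}"])
qed

lemma norm_vector_smult:
  fixes x :: "'a::real_normed_div_algebra^'n"
  shows "norm (c *s x) = norm c * norm x"
  by (simp add: norm_vec_def norm_mult L2_set_right_distrib)

lemma norm_diagonal_scaling_le:
  fixes x :: "'a::real_normed_div_algebra^'n"
  assumes "\<And>k. norm (r k) \<le> R"
  shows "norm (\<chi> k. r k * x $ k) \<le> R * norm x"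
proof -
  have "0 \<le> R"
    using assms[of undefined] norm_ge_zero order_trans by blast
  have "norm (\<chi> k. r k * x $ k) = L2_set (\<lambda>k. norm (r k) * norm (x $ k)) UNIV"
    by (simp add: norm_vec_def norm_mult)
  also have "\<dots> \<le> L2_set (\<lambda>k. R * norm (x $ k)) UNIV"
    by (rule L2_set_mono) (auto intro: mult_right_mono assms)
  also have "\<dots> = R * norm x"
    using \<open>0 \<le> R\<close> by (simp add: norm_vec_def L2_set_right_distrib)
  finally show ?thesis .
qed

lemma norm_diagonalizable_apply_le:
  fixes V :: "complex^'n^'n"
  assumes "\<And>k. norm (r k) \<le> R"
  shows "norm (V *v (\<chi> k. r k * (matrix_inv V *v b) $ k))
    \<le> onorm (\<lambda>x. V *v x) * onorm (\<lambda>x. matrix_inv V *v x) * norm b * R"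
proof -
  have "0 \<le> R"
    using assms[of undefined] norm_ge_zero order_trans by blast
  have "norm (V *v (\<chi> k. r k * (matrix_inv V *v b) $ k))
      \<le> onorm (\<lambda>x. V *v x) * norm (\<chi> k. r k * (matrix_inv V *v b) $ k)"
    by (rule onorm) simp
  also have "\<dots> \<le> onorm (\<lambda>x. V *v x) * (R * norm (matrix_inv V *v b))"
    by (rule mult_left_mono[OF norm_diagonal_scaling_le[OF assms] onorm_pos_le]) simp
  also have "\<dots> \<le> onorm (\<lambda>x. V *v x) * (R * (onorm (\<lambda>x. matrix_inv V *v x) * norm b))"
    by (rule mult_left_mono[OF mult_left_mono[OF onorm \<open>0 \<le> R\<close>] onorm_pos_le]) simp_all
  finally show ?thesis
    by (simp add: mult_ac)
qed

lemma norm_weighted_sum_le: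
  fixes x :: "'j \<Rightarrow> 'a::real_normed_div_algebra^'n"
  assumes "\<And>j. j \<in> S \<Longrightarrow> norm (c j) \<le> M" "\<And>j. j \<in> S \<Longrightarrow> norm (x j) \<le> E"
  shows "norm (\<Sum>j\<in>S. (c j * \<omega> j) *s x j) \<le> M * E * (\<Sum>j\<in>S. norm (\<omega> j))"
proof -
  have term_le: "norm ((c j * \<omega> j) *s x j) \<le> M * E * norm (\<omega> j)" if "j \<in> S" for j
  proof -
    have "norm ((c j * \<omega> j) *s x j) = norm (c j) * norm (x j) * norm (\<omega> j)"
      by (simp add: norm_vector_smult norm_mult)
    also have "\<dots> \<le> M * E * norm (\<omega> j)"
      using assms[OF that]
      by (intro mult_right_mono mult_mono) (auto intro: order_trans[OF norm_ge_zero])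
    finally show ?thesis .
  qed
  have "norm (\<Sum>j\<in>S. (c j * \<omega> j) *s x j) \<le> (\<Sum>j\<in>S. norm ((c j * \<omega> j) *s x j))"
    by (rule norm_sum)
  also have "\<dots> \<le> (\<Sum>j\<in>S. M * E * norm (\<omega> j))"
    by (rule sum_mono) (rule term_le)
  finally show ?thesis
    by (simp only: sum_distrib_left)
qed

lemma norm_quadrature_sum_le:
  fixes x :: "'j \<Rightarrow> complex^'n"
  assumes "S \<noteq> {}" "\<And>j. j \<in> S \<Longrightarrow> norm (c j) \<le> M" "\<And>j. j \<in> S \<Longrightarrow> norm (x j) \<le> E"
    and "(\<Sum>j\<in>S. norm (\<omega> j)) \<le> 2 * pi * L"
  shows "norm ((1 / (2 * pi * \<i>)) *s (\<Sum>j\<in>S. (c j * \<omega> j) *s x j)) \<le> L * M * E"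
proof -
  obtain j where "j \<in> S"
    using assms(1) by blast
  then have "0 \<le> M" "0 \<le> E"
    using assms(2,3)[of j] by (auto intro: order_trans[OF norm_ge_zero])
  then have "0 \<le> M * E"
    by simp
  have "norm (\<Sum>j\<in>S. (c j * \<omega> j) *s x j) \<le> M * E * (\<Sum>j\<in>S. norm (\<omega> j))"
    using assms(2,3) by (rule norm_weighted_sum_le)
  also have "\<dots> \<le> M * E * (2 * pi * L)"
    using assms(4) \<open>0 \<le> M * E\<close> by (rule mult_left_mono)
  finally show ?thesis
    by (simp add: norm_vector_smult norm_divide norm_mult field_simps)
qed

theorem theorem4p2:
  fixes N :: nat and a b :: "nat \<Rightarrow> real" and h :: "nat \<Rightarrow> real \<Rightarrow> real"
    and \<alpha> \<beta> :: "nat \<Rightarrow> int" and p :: "nat \<Rightarrow> real poly"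
    and A V :: "complex^'n^'n" and lam :: "'n \<Rightarrow> complex" and bv :: "complex^'n"
    and \<gamma> :: "real \<Rightarrow> complex" and f :: "complex \<Rightarrow> complex" and U :: "complex set"
    and m k :: nat and z \<omega> :: "nat \<Rightarrow> complex" and G :: "complex \<Rightarrow> real"
    and M L :: real
    and \<Sigma> :: "real set" and w :: "real \<Rightarrow> real" and pw :: "nat \<Rightarrow> real \<Rightarrow> complex"
    and fkm :: "complex^'n" and \<rho> :: "complex \<Rightarrow> complex" and E :: "complex \<Rightarrow> real"
  assumes \<Sigma>_def: "\<Sigma> = Sigma_set N a b"
    and w_def: "w = weight_fun N a b h \<alpha> \<beta>"
    and pw_def: "pw = (\<lambda>l s. complex_of_real (poly (p l) s * w s))"
    and fkm_def: "fkm = - (\<Sum>l<k. (\<Sum>j\<in>{1..m}. f (z j) * \<omega> j * cauchy_transform \<Sigma> (pw l) (z j))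
                          *s (poly_mat (p l) A *v bv))"
    and \<rho>_def: "\<rho> = (\<lambda>x. contour_integral \<gamma> (\<lambda>\<zeta>. f \<zeta> / (\<zeta> - x)) - (\<Sum>j\<in>{1..m}. f (z j) / (z j - x) * \<omega> j))"
    and E_def: "E = (\<lambda>\<zeta>. norm ((\<Sum>j<k. S_transform \<Sigma> (pw j) \<zeta> *s (poly_mat (p j) A *v bv))
                         - matrix_inv (A - mat \<zeta>) *v bv))"
    and N_pos: "N \<ge> 1"
    and intervals: "\<And>j. j < N \<Longrightarrow> a j < b j"
    and disjoint: "\<And>i j. i < N \<Longrightarrow> j < N \<Longrightarrow> i \<noteq> j \<Longrightarrow> {a i..b i} \<inter> {a j..b j} = {}"
    and exps: "\<And>j. j < N \<Longrightarrow> \<alpha> j \<in> {-1, 1} \<and> \<beta> j \<in> {-1, 1}"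
    and h_pos: "\<And>j x. j < N \<Longrightarrow> x \<in> {a j..b j} \<Longrightarrow> h j x > 0"
    and h_analytic: "\<And>j. j < N \<Longrightarrow> \<exists>H W. open W \<and> complex_of_real ` {a j..b j} \<subseteq> W \<and>
                         H holomorphic_on W \<and>
                         (\<forall>x. complex_of_real x \<in> W \<longrightarrow> H (complex_of_real x) = complex_of_real (h j x))"
    and w_normalized: "(w has_integral 1) \<Sigma>"
    and ONP: "orthonormal_polys \<Sigma> w p"
    and V_inv: "invertible V"
    and A_diag: "A = V ** diag_mat lam ** matrix_inv V"
    and eig_not_endpoint: "\<And>l j. j < N \<Longrightarrow> lam l \<noteq> complex_of_real (a j) \<and> lam l \<noteq> complex_of_real (b j)"
    and \<gamma>_path: "valid_path \<gamma>" "simple_path \<gamma>" "pathfinish \<gamma> = pathstart \<gamma>"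
    and \<gamma>_ccw: "\<And>x. x \<notin> path_image \<gamma> \<Longrightarrow> winding_number \<gamma> x = 0 \<or> winding_number \<gamma> x = 1"
    and \<gamma>_encloses: "\<And>l. lam l \<notin> path_image \<gamma> \<and> winding_number \<gamma> (lam l) = 1"
    and f_holo: "open U" "f holomorphic_on U" "path_image \<gamma> \<subseteq> U"
      "\<And>x. x \<notin> path_image \<gamma> \<Longrightarrow> winding_number \<gamma> x \<noteq> 0 \<Longrightarrow> x \<in> U"
    and m_pos: "m \<ge> 1"
    and nodes: "\<And>j. j \<in> {1..m} \<Longrightarrow> z j \<in> path_image \<gamma> \<and> z j \<notin> complex_of_real ` \<Sigma>"
    and green: "exterior_green \<Sigma> G"
    and eig_green: "\<And>l. G (lam l) < Min ((\<lambda>j. G (z j)) ` {1..m})"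
    and f_bound: "\<And>\<zeta>. \<zeta> \<in> path_image \<gamma> \<Longrightarrow> norm (f \<zeta>) \<le> M"
    and weights_bound: "(\<Sum>j\<in>{1..m}. norm (\<omega> j)) \<le> 2 * pi * L"
  shows "norm (fun_mat_vec \<gamma> f A bv - fkm)
           \<le> 1 / (2 * pi) * onorm (\<lambda>x. V *v x) * onorm (\<lambda>x. matrix_inv V *v x) * norm bv
               * Max (range (\<lambda>l. norm (\<rho> (lam l))))
             + L * M * Max ((\<lambda>j. E (z j)) ` {1..m})"
proof -
  define X where "X j = (\<Sum>l<k. S_transform \<Sigma> (pw l) (z j) *s (poly_mat (p l) A *v bv))" for j
  define R where "R j = matrix_inv (mat (z j) - A) *v bv" for j
  define \<rho>max where "\<rho>max = Max (range (\<lambda>l. norm (\<rho> (lam l))))"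
  define Emax where "Emax = Max ((\<lambda>j. E (z j)) ` {1..m})"
  have on_path: "z j \<in> path_image \<gamma>" if "j \<in> {1..m}" for j
    using nodes[OF that] by blast
  have split: "fun_mat_vec \<gamma> f A bv - fkm
      = (1 / (2 * pi * \<i>)) *s (V *v (\<chi> l. \<rho> (lam l) * (matrix_inv V *v bv) $ l))
        + (1 / (2 * pi * \<i>)) *s (\<Sum>j\<in>{1..m}. (f (z j) * \<omega> j) *s (X j + R j))"
    using fun_mat_vec_quadrature_error[OF V_inv \<gamma>_path(1) f_holo(1-3), of lam "{1..m}" z bv \<omega> X]
      \<gamma>_encloses on_path
    unfolding fkm_def X_def R_def \<rho>_def A_diag cauchy_transform_quadrature_swap by auto
  have first_bound: "norm ((1 / (2 * pi * \<i>)) *s (V *v (\<chi> l. \<rho> (lam l) * (matrix_inv V *v bv) $ l)))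
      \<le> 1 / (2 * pi) * onorm (\<lambda>x. V *v x) * onorm (\<lambda>x. matrix_inv V *v x) * norm bv * \<rho>max"
    using norm_diagonalizable_apply_le[of "\<lambda>l. \<rho> (lam l)" \<rho>max V bv]
    unfolding \<rho>max_def
    by (auto simp: Max_ge norm_vector_smult norm_divide norm_mult mult_ac intro: divide_right_mono)
  have second_bound: "norm ((1 / (2 * pi * \<i>)) *s (\<Sum>j\<in>{1..m}. (f (z j) * \<omega> j) *s (X j + R j)))
      \<le> L * M * Emax"
  proof (rule norm_quadrature_sum_le)
    fix j assume j: "j \<in> {1..m}"
    have "matrix_inv (A - mat (z j)) *v bv = - R j"
      unfolding R_def A_diag using \<gamma>_encloses on_path[OF j]
      by (intro resolvent_diagonalizable_neg[OF V_inv]) metis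
    then have "E (z j) = norm (X j + R j)"
      by (simp add: E_def X_def)
    moreover have "E (z j) \<le> Emax"
      unfolding Emax_def using j by (intro Max_ge) auto
    ultimately show "norm (X j + R j) \<le> Emax"
      by simp
  qed (use m_pos f_bound on_path weights_bound in auto)
  show ?thesis
    unfolding split \<rho>max_def [symmetric] Emax_def [symmetric]
    by (rule order_trans[OF norm_triangle_ineq add_mono[OF first_bound second_bound]])
qed

end
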